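(* Let $\mathcal{A}=(\Sigma,Q,I,F,\delta)$ be an NFA and let $\mathcal{A}_{\mathrm{SS}}$ be the DFA output by the subset construction with $\mathcal{A}$ as input. Then $|\mathcal{A}_{\mathrm{SS}}|\le\|\mathcal{A}\|$, where $$\|\mathcal{A}\|=\min_{\mathcal{J}\subseteq\Sigma}\left(1+\sum_{w\in\Sigma\setminus\mathcal{J}}\left|\mathcal{R}(T^{(w)})\right|\right)\left|\mathcal{M}(\mathcal{J})\right|.$$
   Context: An NFA is $\mathcal{A}=(\Sigma,Q,I,F,\delta)$ with finite alphabet $\Sigma$, finite state set $Q=\{q_1,\dots,q_n\}$, initial states $I$, accepting states $F$, transitions $\delta\subseteq Q\times\Sigma\times Q$ ($\varepsilon$-free). The Boolean semifield is $\mathbb{B}=(\{0,1\},\vee,\wedge,0,1)$. For $w\in\Sigma$ the transition matrix $T^{(w)}\in\mathbb{B}^{n\times n}$ has $T^{(w)}_{i,j}=1$ iff $(q_i,w,q_j)\in\delta$. The range $\mathcal{R}(T)$ of a Boolean matrix $T$ is $\{Tv:v\in\mathbb{B}^n\}$. For $\mathcal{J}\subseteq\Sigma$, $\mathcal{M}(\mathcal{J})$ is the monoid of $n\times n$ Boolean matrices generated by $\{T^{(w)}:w\in\mathcal{J}\}$ under Boolean matrix multiplication, containing the identity matrix. The subset construction produces the DFA $\mathcal{A}_{\mathrm{SS}}$ whose states are exactly the subsets $\mathcal{Q}\subseteq Q$ reachable from $\mathcal{Q}_I=I$ by repeatedly applying, for $w\in\Sigma$, the map $\mathcal{Q}\mapsto\{q':(q,w,q')\in\delta,\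 q\in\mathcal{Q}\}$ (including the empty set if reachable); $|\mathcal{A}_{\mathrm{SS}}|$ is its number of states. *)

theory Defs
  imports Main
begin

text \<open>NFA over a finite alphabet (the finite type 'a, i.e. Sigma = UNIV) with
  finite state set (the finite type 'q, i.e. Q = UNIV).\<close>

type_synonym 'q bmat = "'q \<Rightarrow> 'q \<Rightarrow> bool"
type_synonym 'q bvec = "'q \<Rightarrow> bool"

definition bmat_mult :: "'q bmat \<Rightarrow> 'q bmat \<Rightarrow> 'q bmat" where
  "bmat_mult A B = (\<lambda>i j. \<exists>k. A i k \<and> B k j)"

definition bmat_id :: "'q bmat" where
  "bmat_id = (\<lambda>i j. i = j)"

definition bmat_vec :: "'q bmat \<Rightarrow> 'q bvec \<Rightarrow> 'q bvec" where
  "bmat_vec T v = (\<lambda>i. \<exists>j. T i j \<and> v j)"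

definition trans_mat :: "('q \<times> 'a \<times> 'q) set \<Rightarrow> 'a \<Rightarrow> 'q bmat" where
  "trans_mat \<delta> w = (\<lambda>i j. (i, w, j) \<in> \<delta>)"

definition bmat_range :: "'q bmat \<Rightarrow> 'q bvec set" where
  "bmat_range T = {bmat_vec T v | v. True}"

inductive_set gen_monoid :: "('q \<times> 'a \<times> 'q) set \<Rightarrow> 'a set \<Rightarrow> 'q bmat set"
  for \<delta> :: "('q \<times> 'a \<times> 'q) set" and J :: "'a set" where
  gm_id: "bmat_id \<in> gen_monoid \<delta> J"
| gm_gen: "w \<in> J \<Longrightarrow> trans_mat \<delta> w \<in> gen_monoid \<delta> J"
| gm_mult: "A \<in> gen_monoid \<delta> J \<Longrightarrow> B \<in> gen_monoid \<delta> J \<Longrightarrow> bmat_mult A B \<in> gen_monoid \<delta> J"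

definition ss_step :: "('q \<times> 'a \<times> 'q) set \<Rightarrow> 'q set \<Rightarrow> 'a \<Rightarrow> 'q set" where
  "ss_step \<delta> S w = {q'. \<exists>q\<in>S. (q, w, q') \<in> \<delta>}"

inductive_set ss_states :: "('q \<times> 'a \<times> 'q) set \<Rightarrow> 'q set \<Rightarrow> 'q set set"
  for \<delta> :: "('q \<times> 'a \<times> 'q) set" and I :: "'q set" where
  ss_init: "I \<in> ss_states \<delta> I"
| ss_next: "S \<in> ss_states \<delta> I \<Longrightarrow> ss_step \<delta> S w \<in> ss_states \<delta> I"

definition nfa_norm :: "('q::finite \<times> 'a::finite \<times> 'q) set \<Rightarrow> nat" where
  "nfa_norm \<delta> = Min ((\<lambda>J. (1 + (\<Sum>w\<in>UNIV - J. card (bmat_range (trans_mat \<delta> w))))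
                          * card (gen_monoid \<delta> J)) ` Pow (UNIV :: 'a set))"

end

theory Submission
  imports Defs
begin

text \<open>A reachable subset is the row vector \<open>I T(w1) \<dots> T(wk)\<close>.  Cutting the word after
  its last letter \<open>w \<notin> J\<close> writes it as \<open>r M\<close> with \<open>M \<in> \<M>(J)\<close> and \<open>r\<close> either \<open>I\<close> or a
  vector in the row space of \<open>T(w)\<close>.  The row space of a Boolean matrix is no larger than
  its range \<open>\<R>(T)\<close>: a union of rows is the union of all rows it contains, so it is
  recovered from \<open>T v\<close> where \<open>v\<close> is the indicator of its complement.\<close>

definition bmat_img :: "'q set \<Rightarrow> 'q bmat \<Rightarrow> 'q set" where
  "bmat_img S M = {q'. \<exists>q\<in>S. M q q'}"

definition bmat_row_space :: "'q bmat \<Rightarrow> 'q set set" where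
  "bmat_row_space T = range (\<lambda>S. bmat_img S T)"

lemma bmat_img_id [simp]: "bmat_img S bmat_id = S"
  by (auto simp: bmat_img_def bmat_id_def)

lemma bmat_img_mult: "bmat_img S (bmat_mult A B) = bmat_img (bmat_img S A) B"
  by (auto simp: bmat_img_def bmat_mult_def)

lemma ss_step_eq_bmat_img: "ss_step \<delta> S w = bmat_img S (trans_mat \<delta> w)"
  by (auto simp: bmat_img_def ss_step_def trans_mat_def)

lemma bmat_row_space_eq_union_of_rows:
  assumes "r \<in> bmat_row_space T"
  shows "r = bmat_img {i. \<forall>j. T i j \<longrightarrow> j \<in> r} T"
  using assms by (auto simp: bmat_row_space_def bmat_img_def)

lemma inj_on_bmat_row_space:
  "inj_on (\<lambda>r. bmat_vec T (\<lambda>j. j \<notin> r)) (bmat_row_space T)"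
proof (rule inj_onI)
  fix r s
  assume r: "r \<in> bmat_row_space T" and s: "s \<in> bmat_row_space T"
    and eq: "bmat_vec T (\<lambda>j. j \<notin> r) = bmat_vec T (\<lambda>j. j \<notin> s)"
  have rows: "{i. \<forall>j. T i j \<longrightarrow> j \<in> x} = {i. \<not> bmat_vec T (\<lambda>j. j \<notin> x) i}" for x
    by (auto simp: bmat_vec_def)
  have "r = bmat_img {i. \<not> bmat_vec T (\<lambda>j. j \<notin> r) i} T"
    using bmat_row_space_eq_union_of_rows[OF r] by (simp only: rows)
  also have "\<dots> = bmat_img {i. \<not> bmat_vec T (\<lambda>j. j \<notin> s) i} T"
    by (simp only: eq)
  also have "\<dots> = s"
    using bmat_row_space_eq_union_of_rows[OF s] by (simp only: rows)
  finally show "r = s" .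
qed

lemma card_bmat_row_space_le:
  fixes T :: "'q::finite bmat"
  shows "card (bmat_row_space T) \<le> card (bmat_range T)"
proof -
  have "(\<lambda>r. bmat_vec T (\<lambda>j. j \<notin> r)) ` bmat_row_space T \<subseteq> bmat_range T"
    by (auto simp: bmat_range_def)
  then show ?thesis
    by (rule card_inj_on_le[OF inj_on_bmat_row_space]) simp
qed

lemma ss_states_factor:
  assumes "S \<in> ss_states \<delta> I"
  shows "\<exists>r \<in> insert I (\<Union>w\<in>UNIV - J. bmat_row_space (trans_mat \<delta> w)).
           \<exists>M \<in> gen_monoid \<delta> J. S = bmat_img r M"
  using assms
proof (induction rule: ss_states.induct)
  case ss_init
  show ?case
    using gen_monoid.gm_id[of \<delta> J] by (intro bexI[of _ I] bexI[of _ bmat_id]) simp_all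
next
  case (ss_next S w)
  show ?case
  proof (cases "w \<in> J")
    case True
    from ss_next.IH obtain r M
      where r: "r \<in> insert I (\<Union>w\<in>UNIV - J. bmat_row_space (trans_mat \<delta> w))"
        and M: "M \<in> gen_monoid \<delta> J" and S: "S = bmat_img r M"
      by blast
    have "bmat_mult M (trans_mat \<delta> w) \<in> gen_monoid \<delta> J"
      using M True by (intro gen_monoid.gm_mult gen_monoid.gm_gen)
    moreover have "ss_step \<delta> S w = bmat_img r (bmat_mult M (trans_mat \<delta> w))"
      by (simp add: S bmat_img_mult ss_step_eq_bmat_img)
    ultimately show ?thesis
      using r by blast
  next
    case False
    then have "ss_step \<delta> S w \<in> (\<Union>w\<in>UNIV - J. bmat_row_space (trans_mat \<delta> w))"
      by (auto simp: ss_step_eq_bmat_img bmat_row_space_def)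
    then show ?thesis
      using gen_monoid.gm_id[of \<delta> J] by (intro bexI[of _ "ss_step \<delta> S w"] bexI[of _ bmat_id]) simp_all
  qed
qed

lemma card_ss_states_le:
  fixes \<delta> :: "('q::finite \<times> 'a::finite \<times> 'q) set"
  shows "card (ss_states \<delta> I)
    \<le> (1 + (\<Sum>w\<in>UNIV - J. card (bmat_range (trans_mat \<delta> w)))) * card (gen_monoid \<delta> J)"
proof -
  let ?R = "insert I (\<Union>w\<in>UNIV - J. bmat_row_space (trans_mat \<delta> w))"
  let ?G = "gen_monoid \<delta> J"
  have "ss_states \<delta> I \<subseteq> (\<lambda>(r, M). bmat_img r M) ` (?R \<times> ?G)"
    using ss_states_factor by fast
  then have "card (ss_states \<delta> I) \<le> card (?R \<times> ?G)"
    by (metis surj_card_le finite)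
  also have "\<dots> = card ?R * card ?G"
    by (rule card_cartesian_product)
  also have "card ?R \<le> 1 + (\<Sum>w\<in>UNIV - J. card (bmat_row_space (trans_mat \<delta> w)))"
  proof -
    have "card ?R \<le> Suc (card (\<Union>w\<in>UNIV - J. bmat_row_space (trans_mat \<delta> w)))"
      by (simp add: card_insert_if)
    also have "card (\<Union>w\<in>UNIV - J. bmat_row_space (trans_mat \<delta> w))
        \<le> (\<Sum>w\<in>UNIV - J. card (bmat_row_space (trans_mat \<delta> w)))"
      by (rule card_UN_le) simp
    finally show ?thesis by simp
  qed
  also have "\<dots> \<le> 1 + (\<Sum>w\<in>UNIV - J. card (bmat_range (trans_mat \<delta> w)))"
    by (simp add: card_bmat_row_space_le sum_mono)
  finally show ?thesis
    by (simp add: mult_right_mono)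
qed

theorem theorem3:
  fixes \<delta> :: "('q::finite \<times> 'a::finite \<times> 'q) set" and I F :: "'q set"
  shows "card (ss_states \<delta> I) \<le> nfa_norm \<delta>"
proof -
  let ?bound = "\<lambda>J. (1 + (\<Sum>w\<in>UNIV - J. card (bmat_range (trans_mat \<delta> w)))) * card (gen_monoid \<delta> J)"
  have "nfa_norm \<delta> \<in> ?bound ` Pow UNIV"
    unfolding nfa_norm_def by (rule Min_in) auto
  then show ?thesis
    using card_ss_states_le by auto
qed

end
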